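(* Let $(X_\alpha,\tau_\alpha)_{\alpha\in\Omega}$ be a family of topological spaces and let $X=\sum_{\alpha\in\Omega}X_\alpha$ be their topological sum (disjoint union). Then $X$ is a kd-space if and only if each $X_\alpha$ is a kd-space.
   Context: A space is a kd-space if every compact subset is $\delta$-closed. In a space $Y$, a set $U$ is regular open if $U=\mathrm{Int}(\mathrm{Cl}(U))$; a point $x$ is a $\delta$-cluster point of $B\subseteq Y$ if $B\cap U\neq\emptyset$ for every regular open $U\ni x$; $B$ is $\delta$-closed if it contains all its $\delta$-cluster points. *)

theory Defs
  imports "HOL-Analysis.Analysis"
begin

definition regular_open :: "'a topology \<Rightarrow> 'a set \<Rightarrow> bool" where
  "regular_open X U \<longleftrightarrow> U = X interior_of (X closure_of U)"

definition delta_cluster_point :: "'a topology \<Rightarrow> 'a set \<Rightarrow> 'a \<Rightarrow> bool" where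
  "delta_cluster_point X B x \<longleftrightarrow> x \<in> topspace X \<and>
     (\<forall>U. regular_open X U \<and> x \<in> U \<longrightarrow> B \<inter> U \<noteq> {})"

definition delta_closedin :: "'a topology \<Rightarrow> 'a set \<Rightarrow> bool" where
  "delta_closedin X B \<longleftrightarrow> B \<subseteq> topspace X \<and>
     (\<forall>x. delta_cluster_point X B x \<longrightarrow> x \<in> B)"

definition kd_space :: "'a topology \<Rightarrow> bool" where
  "kd_space X \<longleftrightarrow> (\<forall>K. compactin X K \<longrightarrow> delta_closedin X K)"

end

theory Submission
  imports Defs
begin

text \<open>Closure and interior in a topological sum are computed summand by summand, hence a set
  is regular open exactly when all its slices are, and \<open>\<delta>\<close>-closedness is likewise decided
  slicewise. Since the component injections are closed embeddings (hence proper), the slices of a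
  compact set are compact, while a compact subset of one summand stays compact in the sum.\<close>

lemma interior_of_sum_topology:
  "sum_topology X I interior_of U = (SIGMA i:I. X i interior_of {x. (i,x) \<in> U})"
proof (rule interior_of_unique)
  show "(SIGMA i:I. X i interior_of {x. (i,x) \<in> U}) \<subseteq> U"
    using interior_of_subset by fastforce
  show "openin (sum_topology X I) (SIGMA i:I. X i interior_of {x. (i,x) \<in> U})"
    by (simp add: openin_disjoint_union)
next
  fix T assume T: "T \<subseteq> U" "openin (sum_topology X I) T"
  show "T \<subseteq> (SIGMA i:I. X i interior_of {x. (i,x) \<in> U})"
  proof clarify
    fix i x assume "(i,x) \<in> T"
    with T have "i \<in> I" "openin (X i) {x. (i,x) \<in> T}" "{x. (i,x) \<in> T} \<subseteq> {x. (i,x) \<in> U}"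
      by (auto simp: openin_sum_topology)
    with \<open>(i,x) \<in> T\<close> show "i \<in> I \<and> x \<in> X i interior_of {x. (i,x) \<in> U}"
      using interior_of_maximal by fastforce
  qed
qed

lemma closure_of_sum_topology:
  "sum_topology X I closure_of U = (SIGMA i:I. X i closure_of {x. (i,x) \<in> U})"
proof -
  let ?Y = "sum_topology X I"
  have slice_complement: "{x. (i,x) \<in> topspace ?Y - U} = topspace (X i) - {x. (i,x) \<in> U}"
    if "i \<in> I" for i
    using that by auto
  have "?Y closure_of U = topspace ?Y - ?Y interior_of (topspace ?Y - U)"
    by (rule closure_of_interior_of)
  also have "\<dots> = topspace ?Y - (SIGMA i:I. X i interior_of (topspace (X i) - {x. (i,x) \<in> U}))"
    by (simp only: interior_of_sum_topology slice_complement cong: Sigma_cong)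
  also have "\<dots> = (SIGMA i:I. topspace (X i) - X i interior_of (topspace (X i) - {x. (i,x) \<in> U}))"
    by auto
  also have "\<dots> = (SIGMA i:I. X i closure_of {x. (i,x) \<in> U})"
    by (simp only: closure_of_interior_of)
  finally show ?thesis .
qed

lemma regular_open_empty [simp]: "regular_open X {}"
  by (simp add: regular_open_def)

lemma regular_open_sum_topology:
  "regular_open (sum_topology X I) U \<longleftrightarrow>
     U \<subseteq> I \<times> UNIV \<and> (\<forall>i\<in>I. regular_open (X i) {x. (i,x) \<in> U})"
proof -
  have "sum_topology X I interior_of (sum_topology X I closure_of U) =
        (SIGMA i:I. X i interior_of (X i closure_of {x. (i,x) \<in> U}))"
    by (auto simp: interior_of_sum_topology closure_of_sum_topology)
  then show ?thesis
    unfolding regular_open_def by auto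
qed

lemma regular_open_sum_topology_Times:
  assumes "i \<in> I"
  shows "regular_open (sum_topology X I) ({i} \<times> V) \<longleftrightarrow> regular_open (X i) V"
proof -
  have "{x. (j,x) \<in> {i} \<times> V} = (if j = i then V else {})" for j
    by auto
  then show ?thesis
    using assms by (simp only: regular_open_sum_topology) auto
qed

lemma delta_cluster_point_sum_topology:
  "delta_cluster_point (sum_topology X I) B (i,x) \<longleftrightarrow>
     i \<in> I \<and> delta_cluster_point (X i) {y. (i,y) \<in> B} x"
proof
  assume cluster: "delta_cluster_point (sum_topology X I) B (i,x)"
  then have "i \<in> I" "x \<in> topspace (X i)"
    by (auto simp: delta_cluster_point_def)
  moreover have "{y. (i,y) \<in> B} \<inter> V \<noteq> {}" if "regular_open (X i) V" "x \<in> V" for V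
  proof -
    have "regular_open (sum_topology X I) ({i} \<times> V)"
      using \<open>i \<in> I\<close> that(1) by (simp add: regular_open_sum_topology_Times)
    with cluster that(2) have "B \<inter> ({i} \<times> V) \<noteq> {}"
      by (auto simp: delta_cluster_point_def)
    then show ?thesis
      by auto
  qed
  ultimately show "i \<in> I \<and> delta_cluster_point (X i) {y. (i,y) \<in> B} x"
    by (auto simp: delta_cluster_point_def)
next
  assume "i \<in> I \<and> delta_cluster_point (X i) {y. (i,y) \<in> B} x"
  then show "delta_cluster_point (sum_topology X I) B (i,x)"
    by (fastforce simp: delta_cluster_point_def regular_open_sum_topology)
qed

lemma delta_closedin_sum_topology:
  "delta_closedin (sum_topology X I) B \<longleftrightarrow>
     B \<subseteq> Sigma I (topspace \<circ> X) \<and> (\<forall>i\<in>I. delta_closedin (X i) {x. (i,x) \<in> B})"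
  by (fastforce simp: delta_closedin_def delta_cluster_point_sum_topology)

lemma compactin_sum_topology_slice:
  assumes "i \<in> I" "compactin (sum_topology X I) K"
  shows "compactin (X i) {x. (i,x) \<in> K}"
proof -
  have "proper_map (X i) (sum_topology X I) (Pair i)"
    by (simp add: assms(1) closed_injective_imp_proper_map closed_map_component_injection inj_on_def)
  moreover have "{x. (i,x) \<in> K} = {x \<in> topspace (X i). (i,x) \<in> K}"
    using compactin_subset_topspace[OF assms(2)] by auto
  ultimately show ?thesis
    using compactin_proper_map_preimage assms(2) by metis
qed

theorem mainTheorem6:
  fixes X :: "'i \<Rightarrow> 'a topology" and \<Omega> :: "'i set"
  shows "kd_space (sum_topology X \<Omega>) \<longleftrightarrow> (\<forall>\<alpha>\<in>\<Omega>. kd_space (X \<alpha>))"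
proof
  assume kd_sum: "kd_space (sum_topology X \<Omega>)"
  show "\<forall>\<alpha>\<in>\<Omega>. kd_space (X \<alpha>)"
  proof (intro ballI, unfold kd_space_def, intro allI impI)
    fix \<alpha> K assume "\<alpha> \<in> \<Omega>" "compactin (X \<alpha>) K"
    then have "compactin (sum_topology X \<Omega>) (Pair \<alpha> ` K)"
      by (simp add: image_compactin continuous_map_component_injection)
    with kd_sum \<open>\<alpha> \<in> \<Omega>\<close> have "delta_closedin (X \<alpha>) {x. (\<alpha>,x) \<in> Pair \<alpha> ` K}"
      by (simp add: kd_space_def delta_closedin_sum_topology)
    then show "delta_closedin (X \<alpha>) K"
      by (simp add: image_iff)
  qed
next
  assume kd_components: "\<forall>\<alpha>\<in>\<Omega>. kd_space (X \<alpha>)"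
  show "kd_space (sum_topology X \<Omega>)"
    unfolding kd_space_def
  proof (intro allI impI)
    fix K assume "compactin (sum_topology X \<Omega>) K"
    with kd_components show "delta_closedin (sum_topology X \<Omega>) K"
      using compactin_subset_topspace
      by (fastforce simp: kd_space_def delta_closedin_sum_topology compactin_sum_topology_slice)
  qed
qed

end
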